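(* Let $N\in\mathbb{C}^{m\times n}$ have rank $r$ and singular value decomposition $N=U\begin{pmatrix}\Sigma & 0\\ 0 & 0\end{pmatrix}V^{\ast}$, where $\Sigma\in\mathbb{C}^{r\times r}$ is diagonal with positive diagonal entries and $U\in\mathbb{C}^{m\times m}$, $V\in\mathbb{C}^{n\times n}$ are unitary. Let $X\in\mathbb{C}^{m\times m}$ and $Y\in\mathbb{C}^{n\times n}$ be nonsingular and let $M=XNY$. Assume that $X=U\begin{pmatrix}X_{1} & 0\\ X_{2} & X_{4}\end{pmatrix}U^{\ast}$ for some blocks $X_{1}\in\mathbb{C}^{r\times r}$, $X_{2}\in\mathbb{C}^{(m-r)\times r}$, $X_{4}\in\mathbb{C}^{(m-r)\times(m-r)}$, and $Y=V\begin{pmatrix}Y_{1} & Y_{3}\\ 0 & Y_{4}\end{pmatrix}V^{\ast}$ for some blocks $Y_{1}\in\mathbb{C}^{r\times r}$, $Y_{3}\in\mathbb{C}^{r\times(n-r)}$, $Y_{4}\in\mathbb{C}^{(n-r)\times(n-r)}$. If both $XE_{N}$ and $F_{N}Y$ are Hermitian, then $$M^{\dagger}=(I+L^{\ast})(I+LL^{\ast})^{-1}Y^{-1}N^{\dagger}X^{-1}(I+R^{\ast}R)^{-1}(I+R^{\ast}),$$ where $R=XE_{N}X^{-1}(E_{N}-I)$ and $L=(F_{N}-I)Y^{-1}F_{N}Y$.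
   Context: For a complex matrix $A$, $A^{\ast}$ is its conjugate transpose and $A^{\dagger}$ its Moore--Penrose inverse. $E_{A}:=I-AA^{\dagger}$ and $F_{A}:=I-A^{\dagger}A$. $I$ denotes an identity matrix of the appropriate size. *)

theory Defs
  imports "Jordan_Normal_Form.Schur_Decomposition" "Jordan_Normal_Form.DL_Rank"
begin

definition unitary_mat :: "complex mat \<Rightarrow> nat \<Rightarrow> bool" where
  "unitary_mat U n \<longleftrightarrow> U \<in> carrier_mat n n \<and>
     mat_adjoint U * U = 1\<^sub>m n \<and> U * mat_adjoint U = 1\<^sub>m n"

definition hermitian_mat :: "complex mat \<Rightarrow> bool" where
  "hermitian_mat A \<longleftrightarrow> square_mat A \<and> mat_adjoint A = A"

text \<open>The (two-sided) inverse of a square matrix (meaningful when A is nonsingular).\<close>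
definition mat_inv :: "complex mat \<Rightarrow> complex mat" where
  "mat_inv A = (THE B. B \<in> carrier_mat (dim_row A) (dim_row A) \<and>
      A * B = 1\<^sub>m (dim_row A) \<and> B * A = 1\<^sub>m (dim_row A))"

definition penrose :: "complex mat \<Rightarrow> complex mat \<Rightarrow> bool" where
  "penrose A B \<longleftrightarrow> B \<in> carrier_mat (dim_col A) (dim_row A) \<and>
     A * B * A = A \<and> B * A * B = B \<and>
     mat_adjoint (A * B) = A * B \<and> mat_adjoint (B * A) = B * A"

definition mp_inv :: "complex mat \<Rightarrow> complex mat" where
  "mp_inv A = (THE B. penrose A B)"

definition E_mat :: "complex mat \<Rightarrow> complex mat" where
  "E_mat A = 1\<^sub>m (dim_row A) - A * mp_inv A"

definition F_mat :: "complex mat \<Rightarrow> complex mat" where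
  "F_mat A = 1\<^sub>m (dim_col A) - mp_inv A * A"

end

theory Submission
  imports Defs
begin

text \<open>
  In the singular-vector bases \<open>U\<close>, \<open>V\<close> of \<open>N\<close> the matrices become
  \<open>N = diag(\<Sigma>, 0)\<close>, \<open>X = [X\<^sub>1 0; X\<^sub>2 X\<^sub>4]\<close> and \<open>Y = [Y\<^sub>1 Y\<^sub>3; 0 Y\<^sub>4]\<close>.
  With \<open>K = X\<^sub>2 X\<^sub>1\<^sup>-\<^sup>1\<close> and \<open>J = Y\<^sub>1\<^sup>-\<^sup>1 Y\<^sub>3\<close> the product factors as
  \<open>XNY = [I; K] (X\<^sub>1 \<Sigma> Y\<^sub>1) [I J]\<close>, a full-rank factorization, so
  \<open>(XNY)\<^sup>\<dagger> = [I; J\<^sup>*] (I + JJ\<^sup>*)\<^sup>-\<^sup>1 (X\<^sub>1 \<Sigma> Y\<^sub>1)\<^sup>-\<^sup>1 (I + K\<^sup>*K)\<^sup>-\<^sup>1 [I K\<^sup>*]\<close>.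
  In the same bases \<open>R = [0 0; K 0]\<close> and \<open>L = [0 J; 0 0]\<close>, and multiplying out the
  right-hand side gives the same block matrix. All operations involved (products, adjoints,
  inverses, Moore-Penrose inverses) commute with the unitary changes of basis.
\<close>

subsection \<open>Adjoints\<close>

lemma mat_adjoint_eq: "mat_adjoint A = mat (dim_col A) (dim_row A) (\<lambda>(i,j). cnj (A $$ (j,i)))"
  unfolding mat_adjoint_def by (rule eq_matI) (auto simp: mat_of_rows_def cols_def)

lemma dim_mat_adjoint[simp]:
  "dim_row (mat_adjoint A) = dim_col A" "dim_col (mat_adjoint A) = dim_row A"
  for A :: "complex mat"
  by (auto simp: mat_adjoint_eq)

lemma index_mat_adjoint[simp]:
  "i < dim_col A \<Longrightarrow> j < dim_row A \<Longrightarrow> mat_adjoint A $$ (i,j) = cnj (A $$ (j,i))"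
  by (auto simp: mat_adjoint_eq)

lemma mat_adjoint_carrier[simp]: "A \<in> carrier_mat m n \<Longrightarrow> mat_adjoint A \<in> carrier_mat n (m :: nat)"
  for A :: "complex mat"
  by auto

lemma mat_adjoint_adjoint[simp]: "mat_adjoint (mat_adjoint A) = (A :: complex mat)"
  by (rule eq_matI) auto

lemma mat_adjoint_mult[simp]:
  "dim_col A = dim_row B \<Longrightarrow> mat_adjoint (A * B) = mat_adjoint B * mat_adjoint (A :: complex mat)"
  by (rule eq_matI) (auto simp: scalar_prod_def cnj_sum mult.commute)

lemma mat_adjoint_one[simp]: "mat_adjoint (1\<^sub>m n :: complex mat) = 1\<^sub>m n"
  by (rule eq_matI) auto

lemma mat_adjoint_zero[simp]: "mat_adjoint (0\<^sub>m n m :: complex mat) = 0\<^sub>m m n"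
  by (rule eq_matI) auto

lemma mat_adjoint_four_block_mat[simp]:
  "dim_row B = dim_row A \<Longrightarrow> dim_row D = dim_row C \<Longrightarrow> dim_col C = dim_col A \<Longrightarrow>
   dim_col D = dim_col B \<Longrightarrow>
   mat_adjoint (four_block_mat A B C D :: complex mat) =
     four_block_mat (mat_adjoint A) (mat_adjoint C) (mat_adjoint B) (mat_adjoint D)"
  by (rule eq_matI) auto

lemma scalar_prod_mat_adjoint:
  fixes K :: "complex mat"
  assumes "K \<in> carrier_mat p r" "v \<in> carrier_vec r" "w \<in> carrier_vec p"
  shows "(mat_adjoint K *\<^sub>v w) \<bullet>c v = w \<bullet>c (K *\<^sub>v v)"
proof -
  have "(mat_adjoint K *\<^sub>v w) \<bullet>c v = (\<Sum>i<r. \<Sum>l<p. cnj (K $$ (l,i)) * w $ l * cnj (v $ i))"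
    using assms by (simp add: scalar_prod_def sum_distrib_right atLeast0LessThan)
  also have "\<dots> = (\<Sum>l<p. \<Sum>i<r. cnj (K $$ (l,i)) * w $ l * cnj (v $ i))"
    by (rule sum.swap)
  also have "\<dots> = w \<bullet>c (K *\<^sub>v v)"
    using assms by (simp add: scalar_prod_def sum_distrib_left atLeast0LessThan cnj_sum mult_ac)
  finally show ?thesis .
qed

text \<open>
  Variants of library rules whose carrier premises are replaced by equations between
  dimensions, so that the simplifier can multiply out products of block matrices.
\<close>

lemma assoc_mult_mat':
  "dim_col A = dim_row B \<Longrightarrow> dim_col B = dim_row C \<Longrightarrow> A * B * C = A * (B * (C :: 'a :: semiring_0 mat))"
  by (rule assoc_mult_mat[of A "dim_row A" "dim_col A" B "dim_col B" C "dim_col C"]) auto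

lemma right_add_zero_mat': "dim_row A = n \<Longrightarrow> dim_col A = m \<Longrightarrow> A + 0\<^sub>m n m = (A :: 'a :: ring_1 mat)"
  by (rule eq_matI) auto

lemma left_add_zero_mat': "dim_row A = n \<Longrightarrow> dim_col A = m \<Longrightarrow> 0\<^sub>m n m + A = (A :: 'a :: ring_1 mat)"
  by (rule eq_matI) auto

lemma minus_zero_mat': "dim_row A = n \<Longrightarrow> dim_col A = m \<Longrightarrow> A - 0\<^sub>m n m = (A :: 'a :: ring_1 mat)"
  by (rule eq_matI) auto

lemma zero_minus_mat': "dim_row A = n \<Longrightarrow> dim_col A = m \<Longrightarrow> 0\<^sub>m n m - A = - (A :: 'a :: ring_1 mat)"
  by (rule eq_matI) auto

lemma uminus_zero_mat[simp]: "- (0\<^sub>m n m) = (0\<^sub>m n m :: 'a :: ring_1 mat)"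
  by (rule eq_matI) auto

lemma minus_r_inv_mat': "A - A = 0\<^sub>m (dim_row A) (dim_col (A :: 'a :: ring_1 mat))"
  by (rule eq_matI) auto

lemma add_uminus_mat': "A + - A = 0\<^sub>m (dim_row A) (dim_col (A :: 'a :: ring_1 mat))"
  by (rule eq_matI) auto

lemma uminus_add_mat': "- A + A = 0\<^sub>m (dim_row A) (dim_col (A :: 'a :: ring_1 mat))"
  by (rule eq_matI) auto

lemma mult_four_block_mat':
  fixes A1 B1 C1 D1 A2 B2 C2 D2 :: "'a :: ring_1 mat"
  assumes "dim_row B1 = dim_row A1" "dim_row D1 = dim_row C1" "dim_col C1 = dim_col A1"
    "dim_col D1 = dim_col B1" "dim_row B2 = dim_row A2" "dim_row D2 = dim_row C2"
    "dim_col C2 = dim_col A2" "dim_col D2 = dim_col B2"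
    "dim_col A1 = dim_row A2" "dim_col B1 = dim_row C2"
  shows "four_block_mat A1 B1 C1 D1 * four_block_mat A2 B2 C2 D2 =
    four_block_mat (A1 * A2 + B1 * C2) (A1 * B2 + B1 * D2) (C1 * A2 + D1 * C2) (C1 * B2 + D1 * D2)"
  using assms by (intro mult_four_block_mat) (auto intro!: carrier_matI)

lemma add_four_block_mat':
  fixes A1 B1 C1 D1 A2 B2 C2 D2 :: "'a :: ring_1 mat"
  assumes "dim_row B1 = dim_row A1" "dim_row D1 = dim_row C1" "dim_col C1 = dim_col A1"
    "dim_col D1 = dim_col B1" "dim_row A2 = dim_row A1" "dim_col A2 = dim_col A1"
    "dim_row B2 = dim_row B1" "dim_col B2 = dim_col B1" "dim_row C2 = dim_row C1"
    "dim_col C2 = dim_col C1" "dim_row D2 = dim_row D1" "dim_col D2 = dim_col D1"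
  shows "four_block_mat A1 B1 C1 D1 + four_block_mat A2 B2 C2 D2 =
    four_block_mat (A1 + A2) (B1 + B2) (C1 + C2) (D1 + D2)"
  using assms by (intro eq_matI) auto

lemma one_add_four_block_mat:
  "dim_row A = a \<Longrightarrow> dim_col A = a \<Longrightarrow> dim_row B = a \<Longrightarrow> dim_col B = b \<Longrightarrow>
   dim_row C = b \<Longrightarrow> dim_col C = a \<Longrightarrow> dim_row D = b \<Longrightarrow> dim_col D = b \<Longrightarrow>
   1\<^sub>m (a + b) + four_block_mat A B C D = four_block_mat (1\<^sub>m a + A) B C (1\<^sub>m b + (D :: 'a :: ring_1 mat))"
  by (rule eq_matI) auto

lemma four_block_mat_minus_one:
  "dim_row A = a \<Longrightarrow> dim_col A = a \<Longrightarrow> dim_row B = a \<Longrightarrow> dim_col B = b \<Longrightarrow>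
   dim_row C = b \<Longrightarrow> dim_col C = a \<Longrightarrow> dim_row D = b \<Longrightarrow> dim_col D = b \<Longrightarrow>
   four_block_mat A B C D - 1\<^sub>m (a + b) = four_block_mat (A - 1\<^sub>m a) B C (D - 1\<^sub>m b :: 'a :: ring_1 mat)"
  by (rule eq_matI) auto

lemma one_minus_four_block_mat:
  "dim_row A = a \<Longrightarrow> dim_col A = a \<Longrightarrow> dim_row B = a \<Longrightarrow> dim_col B = b \<Longrightarrow>
   dim_row C = b \<Longrightarrow> dim_col C = a \<Longrightarrow> dim_row D = b \<Longrightarrow> dim_col D = b \<Longrightarrow>
   1\<^sub>m (a + b) - four_block_mat A B C D = four_block_mat (1\<^sub>m a - A) (- B) (- C) (1\<^sub>m b - (D :: 'a :: ring_1 mat))"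
  by (rule eq_matI) auto

lemma four_block_mat_empty:
  "A \<in> carrier_mat a b \<Longrightarrow> four_block_mat A (0\<^sub>m a 0) (0\<^sub>m 0 b) (0\<^sub>m 0 0) = (A :: 'a :: ring_1 mat)"
  by (rule eq_matI) auto

lemma mult_four_block_mat_empty_lower:
  fixes M A B C D :: "'a :: ring_1 mat"
  assumes "dim_row M = dim_col M" "dim_col M = dim_row A" "dim_row B = dim_row A"
    "dim_row C = 0" "dim_row D = 0" "dim_col C = dim_col A" "dim_col D = dim_col B"
  shows "M * four_block_mat A B C D = four_block_mat (M * A) (M * B) (0\<^sub>m 0 (dim_col A)) (0\<^sub>m 0 (dim_col B))"
  using assms by (intro eq_matI) (auto simp: scalar_prod_def)

lemmas block_mat_simps = assoc_mult_mat' right_add_zero_mat' left_add_zero_mat' minus_zero_mat'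
  zero_minus_mat' minus_r_inv_mat' add_uminus_mat' uminus_add_mat' mult_four_block_mat'
  add_four_block_mat' one_add_four_block_mat four_block_mat_minus_one one_minus_four_block_mat
  four_block_mat_empty mult_four_block_mat_empty_lower

lemma left_inverse_cancel_mat:
  "L * A = 1\<^sub>m k \<Longrightarrow> dim_col L = k \<Longrightarrow> dim_row A = k \<Longrightarrow> dim_row W = k \<Longrightarrow>
   L * (A * W) = (W :: 'a :: ring_1 mat)"
  by (metis assoc_mult_mat' index_mult_mat(3) index_one_mat(3) left_mult_one_mat')

subsection \<open>Inverses and determinants\<close>

lemma mat_inv_eqI:
  assumes A: "A \<in> carrier_mat n n" and B: "B \<in> carrier_mat n n"
    and AB: "A * B = 1\<^sub>m n" and BA: "B * A = 1\<^sub>m n"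
  shows "mat_inv A = B"
  unfolding mat_inv_def
proof (rule the_equality)
  fix C assume "C \<in> carrier_mat (dim_row A) (dim_row A) \<and> A * C = 1\<^sub>m (dim_row A) \<and> C * A = 1\<^sub>m (dim_row A)"
  then have C: "C \<in> carrier_mat n n" "C * A = 1\<^sub>m n" using A by auto
  show "C = B" using left_inverse_cancel_mat[OF C(2), of B] A B C AB by auto
qed (use A B AB BA in auto)

lemma det_nonzero_mat_inv:
  assumes A: "A \<in> carrier_mat n n" and "det A \<noteq> 0"
  shows "mat_inv A \<in> carrier_mat n n" "A * mat_inv A = 1\<^sub>m n" "mat_inv A * A = 1\<^sub>m n"
proof -
  have "A \<in> Units (ring_mat TYPE(complex) n undefined)"
    by (rule det_non_zero_imp_unit[OF assms])
  then obtain B where "B \<in> carrier_mat n n" "A * B = 1\<^sub>m n" "B * A = 1\<^sub>m n"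
    unfolding Units_def by (auto simp: ring_mat_def)
  with mat_inv_eqI[OF A this] show "mat_inv A \<in> carrier_mat n n" "A * mat_inv A = 1\<^sub>m n"
    "mat_inv A * A = 1\<^sub>m n" by auto
qed

lemma det_nonzero_mat_inv_cancel:
  assumes "A \<in> carrier_mat n n" "det A \<noteq> 0" "dim_row W = n"
  shows "A * (mat_inv A * W) = W" "mat_inv A * (A * W) = W"
  using det_nonzero_mat_inv[OF assms(1,2)] assms by (auto intro: left_inverse_cancel_mat)

lemma invertible_mat_det_nonzero:
  assumes A: "A \<in> carrier_mat n n" and "invertible_mat A"
  shows "det A \<noteq> (0 :: 'a :: comm_ring_1)"
proof -
  obtain B where AB: "A * B = 1\<^sub>m n" and BA: "B * A = 1\<^sub>m (dim_row B)"
    using assms unfolding invertible_mat_def inverts_mat_def by auto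
  have B: "B \<in> carrier_mat n n"
    using arg_cong[OF AB, of dim_col] arg_cong[OF BA, of dim_row] arg_cong[OF BA, of dim_col] A
    by (auto intro!: carrier_matI)
  have "det A * det B = det (1\<^sub>m n :: 'a mat)" using det_mult[OF A B] AB by simp
  then show ?thesis by auto
qed

lemma det_diagonal_mat_nonzero:
  assumes A: "A \<in> carrier_mat n n" and "diagonal_mat A" and "\<forall>i<n. A $$ (i,i) \<noteq> 0"
  shows "det A \<noteq> (0 :: 'a :: idom)"
proof -
  have "det A = prod_list (diag_mat A)"
    using assms by (intro det_upper_triangular[OF _ A]) (auto simp: upper_triangular_def diagonal_mat_def)
  with assms show ?thesis by (auto simp: prod_list_zero_iff diag_mat_def)
qed

lemma rank_le_dim_row:
  fixes N :: "complex mat"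
  assumes N: "N \<in> carrier_mat m n"
  shows "vec_space.rank m N \<le> m"
proof -
  interpret vec_space "TYPE(complex)" m .
  have "VectorSpace.subspace class_ring (span (set (cols N))) V"
    by (rule span_is_subspace) (use N in \<open>auto simp: cols_def\<close>)
  then have "rank N \<le> dim"
    unfolding rank_def by (rule subspace_dim[OF _ fin_dim fin_dim_span_cols[OF N]])
  then show ?thesis by (simp add: dim_is_n)
qed

lemma unitary_matD:
  "unitary_mat U n \<Longrightarrow>
   dim_row U = n \<and> dim_col U = n \<and> mat_adjoint U * U = 1\<^sub>m n \<and> U * mat_adjoint U = 1\<^sub>m n"
  unfolding unitary_mat_def by auto

lemma det_unitary_similar:
  assumes U: "unitary_mat U n" and A: "A \<in> carrier_mat n n"
  shows "det (U * A * mat_adjoint U) = det A"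
proof -
  have U': "U \<in> carrier_mat n n" "mat_adjoint U \<in> carrier_mat n n"
    using unitary_matD[OF U] by auto
  have "det (U * A * mat_adjoint U) = det A * (det U * det (mat_adjoint U))"
    using A U' by (simp add: det_mult[of _ n])
  also have "det U * det (mat_adjoint U) = 1"
    using det_mult[OF U'(1,2)] unitary_matD[OF U] by simp
  finally show ?thesis by simp
qed

lemma det_unitary_similar_lower_block_triangular:
  assumes "unitary_mat U (k + l)" "A \<in> carrier_mat k k" "C \<in> carrier_mat l k" "D \<in> carrier_mat l l"
  shows "det (U * four_block_mat A (0\<^sub>m k l) C D * mat_adjoint U) = det A * det D"
  using assms det_unitary_similar det_four_block_mat_upper_right_zero[OF assms(2) refl assms(3,4)]
  by (simp add: four_block_carrier_mat)

lemma det_unitary_similar_upper_block_triangular: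
  assumes "unitary_mat U (k + l)" "A \<in> carrier_mat k k" "B \<in> carrier_mat k l" "D \<in> carrier_mat l l"
  shows "det (U * four_block_mat A B (0\<^sub>m l k) D * mat_adjoint U) = det A * det D"
  using assms det_unitary_similar det_four_block_mat_lower_left_zero[OF assms(2,3) refl assms(4)]
  by (simp add: four_block_carrier_mat)

lemma det_one_add_gram_nonzero:
  fixes K :: "complex mat"
  assumes K: "K \<in> carrier_mat p r"
  shows "det (1\<^sub>m r + mat_adjoint K * K) \<noteq> 0"
proof
  have "1\<^sub>m r + mat_adjoint K * K \<in> carrier_mat r r" using carrier_matD[OF K] by (auto intro!: carrier_matI)
  moreover assume "det (1\<^sub>m r + mat_adjoint K * K) = 0"
  ultimately obtain v where v: "v \<in> carrier_vec r" "v \<noteq> 0\<^sub>v r"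
    and kernel: "(1\<^sub>m r + mat_adjoint K * K) *\<^sub>v v = 0\<^sub>v r"
    using det_0_iff_vec_prod_zero_field by blast
  have Kv: "K *\<^sub>v v \<in> carrier_vec p" using K v by auto
  have "(1\<^sub>m r + mat_adjoint K * K) *\<^sub>v v = v + mat_adjoint K *\<^sub>v (K *\<^sub>v v)"
    using K v by (subst add_mult_distrib_mat_vec[of _ r r]) (auto simp: assoc_mult_mat_vec[of _ r p _ r])
  with kernel have sum0: "v + mat_adjoint K *\<^sub>v (K *\<^sub>v v) = 0\<^sub>v r" by simp
  have "mat_adjoint K *\<^sub>v (K *\<^sub>v v) \<in> carrier_vec r"
    using K Kv by (intro mult_mat_vec_carrier[of _ r p]) auto
  then have "(v + mat_adjoint K *\<^sub>v (K *\<^sub>v v)) \<bullet>c v = v \<bullet>c v + (K *\<^sub>v v) \<bullet>c (K *\<^sub>v v)"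
    using v scalar_prod_mat_adjoint[OF K v(1) Kv] by (subst add_scalar_prod_distrib[of _ r]) auto
  then have "v \<bullet>c v + (K *\<^sub>v v) \<bullet>c (K *\<^sub>v v) = 0" using sum0 v by simp
  then have "v \<bullet>c v = 0"
    using conjugate_square_ge_0_vec[of v] conjugate_square_ge_0_vec[of "K *\<^sub>v v"]
    by (metis add_nonneg_eq_0_iff)
  with v show False by simp
qed

subsection \<open>Moore-Penrose inverses\<close>

lemma penrose_unique:
  assumes "penrose A B" "penrose A C"
  shows "B = C"
proof -
  define m n where "m = dim_row A" and "n = dim_col A"
  have A: "A \<in> carrier_mat m n" by (auto simp: m_def n_def)
  have B: "B \<in> carrier_mat n m" and C: "C \<in> carrier_mat n m"
    using assms by (auto simp: penrose_def m_def n_def)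
  have PB: "A * B * A = A" "B * A * B = B" "mat_adjoint (A * B) = A * B" "mat_adjoint (B * A) = B * A"
    and PC: "A * C * A = A" "C * A * C = C" "mat_adjoint (A * C) = A * C" "mat_adjoint (C * A) = C * A"
    using assms by (auto simp: penrose_def)
  have "B = B * (A * B)" using PB A B by (simp add: block_mat_simps)
  also have "\<dots> = B * mat_adjoint (A * C * A * B)" using PB PC by simp
  also have "\<dots> = B * (mat_adjoint (A * B) * mat_adjoint (A * C))" using A B C by (simp add: block_mat_simps)
  also have "\<dots> = B * ((A * B) * (A * C))" using PB PC by simp
  also have "\<dots> = (B * A * B) * A * C" using A B C by (simp add: block_mat_simps)
  finally have B_eq: "B = B * A * C" using PB by simp
  have "C = (C * A) * C" using PC A C by (simp add: block_mat_simps)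
  also have "\<dots> = mat_adjoint (C * A * B * A) * C" using PB PC A B C by (simp add: block_mat_simps)
  also have "\<dots> = (mat_adjoint (B * A) * mat_adjoint (C * A)) * C" using A B C by (simp add: block_mat_simps)
  also have "\<dots> = B * A * (C * A * C)" using PB PC A B C by (simp add: block_mat_simps)
  finally have "C = B * A * C" using PC by simp
  with B_eq show ?thesis by simp
qed

lemma mp_inv_eqI: "penrose A B \<Longrightarrow> mp_inv A = B"
  unfolding mp_inv_def by (rule the_equality) (auto intro: penrose_unique)

lemma hermitian_inverse:
  fixes S T :: "complex mat"
  assumes "S \<in> carrier_mat k k" "mat_adjoint S = S" "T \<in> carrier_mat k k"
    "S * T = 1\<^sub>m k" "T * S = 1\<^sub>m k"
  shows "mat_adjoint T = T"
proof -
  have "mat_adjoint (S * T) = mat_adjoint (1\<^sub>m k)" using assms(4) by (rule arg_cong)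
  then have "mat_adjoint T * S = 1\<^sub>m k" using assms(1-3) by simp
  then show ?thesis using left_inverse_cancel_mat[of "mat_adjoint T" S k T] assms by simp
qed

lemma penrose_full_rank_factorization:
  fixes F B H Fi Bi Hi :: "complex mat"
  assumes F: "F \<in> carrier_mat m k" "Fi \<in> carrier_mat k k"
      "mat_adjoint F * F * Fi = 1\<^sub>m k" "Fi * (mat_adjoint F * F) = 1\<^sub>m k"
    and B: "B \<in> carrier_mat k k" "Bi \<in> carrier_mat k k" "B * Bi = 1\<^sub>m k" "Bi * B = 1\<^sub>m k"
    and H: "H \<in> carrier_mat k n" "Hi \<in> carrier_mat k k"
      "H * mat_adjoint H * Hi = 1\<^sub>m k" "Hi * (H * mat_adjoint H) = 1\<^sub>m k"
  shows "penrose (F * B * H) (mat_adjoint H * Hi * Bi * Fi * mat_adjoint F)"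
proof -
  have Fi_herm: "mat_adjoint Fi = Fi"
    by (rule hermitian_inverse[of "mat_adjoint F * F" k]) (use F in \<open>auto simp: block_mat_simps\<close>)
  have Hi_herm: "mat_adjoint Hi = Hi"
    by (rule hermitian_inverse[of "H * mat_adjoint H" k]) (use H in \<open>auto simp: block_mat_simps\<close>)
  have cancel: "\<And>W. dim_row W = k \<Longrightarrow> Fi * (mat_adjoint F * (F * W)) = W"
    "\<And>W. dim_row W = k \<Longrightarrow> H * (mat_adjoint H * (Hi * W)) = W"
    "\<And>W. dim_row W = k \<Longrightarrow> Hi * (H * (mat_adjoint H * W)) = W"
    "\<And>W. dim_row W = k \<Longrightarrow> B * (Bi * W) = W"
    "\<And>W. dim_row W = k \<Longrightarrow> Bi * (B * W) = W"
    using left_inverse_cancel_mat[OF F(4)] left_inverse_cancel_mat[OF H(3)]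
      left_inverse_cancel_mat[OF H(4)] left_inverse_cancel_mat[OF B(3)] left_inverse_cancel_mat[OF B(4)]
      F H B by (auto simp: block_mat_simps)
  let ?A = "F * B * H" and ?Z = "mat_adjoint H * Hi * Bi * Fi * mat_adjoint F"
  have AZ: "?A * ?Z = F * (Fi * mat_adjoint F)" and ZA: "?Z * ?A = mat_adjoint H * (Hi * H)"
    using F B H by (simp_all add: block_mat_simps cancel)
  show ?thesis unfolding penrose_def
  proof (intro conjI)
    show "?A * ?Z * ?A = ?A" "?Z * ?A * ?Z = ?Z"
      unfolding AZ ZA using F B H by (simp_all add: block_mat_simps cancel)
    show "mat_adjoint (?A * ?Z) = ?A * ?Z" "mat_adjoint (?Z * ?A) = ?Z * ?A"
      unfolding AZ ZA using F H Fi_herm Hi_herm by (simp_all add: block_mat_simps)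
  qed (use F B H in auto)
qed

subsection \<open>Unitary changes of basis\<close>

definition basis_change :: "complex mat \<Rightarrow> complex mat \<Rightarrow> complex mat \<Rightarrow> complex mat" where
  "basis_change U A W = U * A * mat_adjoint W"

lemma dim_basis_change[simp]:
  "dim_row (basis_change U A W) = dim_row U" "dim_col (basis_change U A W) = dim_row W"
  unfolding basis_change_def by auto

lemma basis_change_mult[simp]:
  assumes "unitary_mat W (dim_col A)" "dim_row B = dim_col A" "dim_col U = dim_row A"
    "dim_col Z = dim_col B"
  shows "basis_change U A W * basis_change W B Z = basis_change U (A * B) Z"
proof -
  have W: "dim_row W = dim_col A" "dim_col W = dim_col A" "mat_adjoint W * W = 1\<^sub>m (dim_col A)"
    using unitary_matD[OF assms(1)] by auto
  then have "mat_adjoint W * (W * (B * mat_adjoint Z)) = B * mat_adjoint Z"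
    using assms by (intro left_inverse_cancel_mat) auto
  then show ?thesis
    unfolding basis_change_def using assms W by (simp add: block_mat_simps)
qed

lemma basis_change_add:
  assumes "dim_col U = dim_row A" "dim_col W = dim_col A" "dim_row B = dim_row A" "dim_col B = dim_col A"
  shows "basis_change U A W + basis_change U B W = basis_change U (A + B) W"
proof -
  have "U * (A + B) = U * A + U * B"
    using assms by (intro mult_add_distrib_mat[of U "dim_row U" "dim_row A" A "dim_col A" B]) auto
  moreover have "(U * A + U * B) * mat_adjoint W = U * A * mat_adjoint W + U * B * mat_adjoint W"
    using assms by (intro add_mult_distrib_mat[of _ "dim_row U" "dim_col A" _ _ "dim_row W"]) auto
  ultimately show ?thesis unfolding basis_change_def by simp
qed

lemma basis_change_minus:
  assumes "dim_col U = dim_row A" "dim_col W = dim_col A" "dim_row B = dim_row A" "dim_col B = dim_col A"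
  shows "basis_change U A W - basis_change U B W = basis_change U (A - B) W"
proof -
  have "U * (A - B) = U * A - U * B"
    using assms by (intro mult_minus_distrib_mat[of U "dim_row U" "dim_row A" A "dim_col A" B]) auto
  moreover have "(U * A - U * B) * mat_adjoint W = U * A * mat_adjoint W - U * B * mat_adjoint W"
    using assms by (intro minus_mult_distrib_mat[of _ "dim_row U" "dim_col A" _ _ "dim_row W"]) auto
  ultimately show ?thesis unfolding basis_change_def by simp
qed

lemma basis_change_one: "unitary_mat U n \<Longrightarrow> basis_change U (1\<^sub>m n) U = 1\<^sub>m n"
  unfolding basis_change_def by (simp add: unitary_matD)

lemma one_add_basis_change[simp]:
  "unitary_mat U n \<Longrightarrow> dim_row A = n \<Longrightarrow> dim_col A = n \<Longrightarrow>
   1\<^sub>m n + basis_change U A U = basis_change U (1\<^sub>m n + A) U"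
  by (subst basis_change_one[symmetric], assumption, rule basis_change_add) (auto dest: unitary_matD)

lemma basis_change_minus_one[simp]:
  "unitary_mat U n \<Longrightarrow> dim_row A = n \<Longrightarrow> dim_col A = n \<Longrightarrow>
   basis_change U A U - 1\<^sub>m n = basis_change U (A - 1\<^sub>m n) U"
  by (subst basis_change_one[symmetric], assumption, rule basis_change_minus) (auto dest: unitary_matD)

lemma one_minus_basis_change[simp]:
  "unitary_mat U n \<Longrightarrow> dim_row A = n \<Longrightarrow> dim_col A = n \<Longrightarrow>
   1\<^sub>m n - basis_change U A U = basis_change U (1\<^sub>m n - A) U"
  by (subst basis_change_one[symmetric], assumption, rule basis_change_minus) (auto dest: unitary_matD)

lemma mat_adjoint_basis_change[simp]:
  "dim_col U = dim_row A \<Longrightarrow> dim_col W = dim_col A \<Longrightarrow>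
   mat_adjoint (basis_change U A W) = basis_change W (mat_adjoint A) U"
  unfolding basis_change_def by (simp add: block_mat_simps)

lemma penrose_basis_change:
  assumes U: "unitary_mat U (dim_row A)" and W: "unitary_mat W (dim_col A)" and P: "penrose A B"
  shows "penrose (basis_change U A W) (basis_change W B U)"
proof -
  have B: "dim_row B = dim_col A" "dim_col B = dim_row A" using P unfolding penrose_def by auto
  have AB: "basis_change U A W * basis_change W B U = basis_change U (A * B) U"
    and BA: "basis_change W B U * basis_change U A W = basis_change W (B * A) W"
    using U W B unitary_matD[OF U] unitary_matD[OF W] by auto
  note dims = B unitary_matD[OF U] unitary_matD[OF W]
  show ?thesis unfolding penrose_def AB BA
  proof (intro conjI)
    show "basis_change U (A * B) U * basis_change U A W = basis_change U A W"
      "basis_change W (B * A) W * basis_change W B U = basis_change W B U"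
      using P U W dims by (simp_all add: penrose_def)
    show "mat_adjoint (basis_change U (A * B) U) = basis_change U (A * B) U"
      "mat_adjoint (basis_change W (B * A) W) = basis_change W (B * A) W"
      using P dims unfolding penrose_def by (simp_all del: mat_adjoint_mult)
  qed (use dims in \<open>auto intro!: carrier_matI\<close>)
qed

lemma mat_inv_basis_change:
  assumes U: "unitary_mat U n" and "A \<in> carrier_mat n n" "B \<in> carrier_mat n n"
    "A * B = 1\<^sub>m n" "B * A = 1\<^sub>m n"
  shows "mat_inv (basis_change U A U) = basis_change U B U"
proof (rule mat_inv_eqI)
  have "basis_change U A U * basis_change U B U = basis_change U (A * B) U"
    "basis_change U B U * basis_change U A U = basis_change U (B * A) U"
    using assms unitary_matD[OF U] by auto
  then show "basis_change U A U * basis_change U B U = 1\<^sub>m n"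
    "basis_change U B U * basis_change U A U = 1\<^sub>m n"
    using assms basis_change_one[OF U] by simp_all
qed (use unitary_matD[OF U] in auto)

subsection \<open>The computation in singular-vector coordinates\<close>

locale triangular_blocks =
  fixes S X1 X2 X4 Y1 Y3 Y4 :: "complex mat" and r p q :: nat
  assumes S: "S \<in> carrier_mat r r" "det S \<noteq> 0"
    and X1: "X1 \<in> carrier_mat r r" "det X1 \<noteq> 0"
    and X2: "X2 \<in> carrier_mat p r"
    and X4: "X4 \<in> carrier_mat p p" "det X4 \<noteq> 0"
    and Y1: "Y1 \<in> carrier_mat r r" "det Y1 \<noteq> 0"
    and Y3: "Y3 \<in> carrier_mat r q"
    and Y4: "Y4 \<in> carrier_mat q q" "det Y4 \<noteq> 0"
begin

definition "K = X2 * mat_inv X1"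
definition "J = mat_inv Y1 * Y3"
definition "P = mat_inv (1\<^sub>m r + mat_adjoint K * K)"
definition "Q = mat_inv (1\<^sub>m r + J * mat_adjoint J)"

lemma carrier_factors:
  "mat_inv S \<in> carrier_mat r r" "mat_inv X1 \<in> carrier_mat r r" "mat_inv X4 \<in> carrier_mat p p"
  "mat_inv Y1 \<in> carrier_mat r r" "mat_inv Y4 \<in> carrier_mat q q"
  "K \<in> carrier_mat p r" "J \<in> carrier_mat r q"
proof -
  show inv: "mat_inv S \<in> carrier_mat r r" "mat_inv X1 \<in> carrier_mat r r" "mat_inv X4 \<in> carrier_mat p p"
    "mat_inv Y1 \<in> carrier_mat r r" "mat_inv Y4 \<in> carrier_mat q q"
    using det_nonzero_mat_inv(1) S X1 X4 Y1 Y4 by auto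
  show "K \<in> carrier_mat p r" "J \<in> carrier_mat r q"
    unfolding K_def J_def using inv X2 Y3 by (auto intro: mult_carrier_mat)
qed

lemma gram_nonsingular:
  "1\<^sub>m r + mat_adjoint K * K \<in> carrier_mat r r" "det (1\<^sub>m r + mat_adjoint K * K) \<noteq> 0"
  "1\<^sub>m r + J * mat_adjoint J \<in> carrier_mat r r" "det (1\<^sub>m r + J * mat_adjoint J) \<noteq> 0"
  using carrier_factors det_one_add_gram_nonzero[of K p r] det_one_add_gram_nonzero[of "mat_adjoint J" q r]
  by auto

lemma dim_factors[simp]:
  "dim_row S = r" "dim_col S = r" "dim_row X1 = r" "dim_col X1 = r" "dim_row X2 = p" "dim_col X2 = r"
  "dim_row X4 = p" "dim_col X4 = p" "dim_row Y1 = r" "dim_col Y1 = r" "dim_row Y3 = r" "dim_col Y3 = q"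
  "dim_row Y4 = q" "dim_col Y4 = q"
  "dim_row (mat_inv S) = r" "dim_col (mat_inv S) = r" "dim_row (mat_inv X1) = r" "dim_col (mat_inv X1) = r"
  "dim_row (mat_inv X4) = p" "dim_col (mat_inv X4) = p" "dim_row (mat_inv Y1) = r"
  "dim_col (mat_inv Y1) = r" "dim_row (mat_inv Y4) = q" "dim_col (mat_inv Y4) = q"
  "dim_row K = p" "dim_col K = r" "dim_row J = r" "dim_col J = q"
  "dim_row P = r" "dim_col P = r" "dim_row Q = r" "dim_col Q = r"
  using S X1 X2 X4 Y1 Y3 Y4 carrier_factors det_nonzero_mat_inv(1)[OF gram_nonsingular(1,2)]
    det_nonzero_mat_inv(1)[OF gram_nonsingular(3,4)] by (auto simp: P_def Q_def)

lemmas mat_inv_factors[simp] =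
  det_nonzero_mat_inv(2,3)[OF S] det_nonzero_mat_inv_cancel[OF S]
  det_nonzero_mat_inv(2,3)[OF X1] det_nonzero_mat_inv_cancel[OF X1]
  det_nonzero_mat_inv(2,3)[OF X4] det_nonzero_mat_inv_cancel[OF X4]
  det_nonzero_mat_inv(2,3)[OF Y1] det_nonzero_mat_inv_cancel[OF Y1]
  det_nonzero_mat_inv(2,3)[OF Y4] det_nonzero_mat_inv_cancel[OF Y4]
  det_nonzero_mat_inv(2,3)[OF gram_nonsingular(1,2), folded P_def]
  det_nonzero_mat_inv_cancel[OF gram_nonsingular(1,2), folded P_def]
  det_nonzero_mat_inv(2,3)[OF gram_nonsingular(3,4), folded Q_def]
  det_nonzero_mat_inv_cancel[OF gram_nonsingular(3,4), folded Q_def]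

text \<open>The suffix \<open>t\<close> marks a matrix in singular-vector coordinates: \<open>N = U Nt V\<^sup>*\<close>,
  \<open>X = U Xt U\<^sup>*\<close>, \<open>Y = V Yt V\<^sup>*\<close>, and so on.\<close>

definition "Xt = four_block_mat X1 (0\<^sub>m r p) X2 X4"
definition "Xt_inv = four_block_mat (mat_inv X1) (0\<^sub>m r p) (- (mat_inv X4 * K)) (mat_inv X4)"
definition "Yt = four_block_mat Y1 Y3 (0\<^sub>m q r) Y4"
definition "Yt_inv = four_block_mat (mat_inv Y1) (- (J * mat_inv Y4)) (0\<^sub>m q r) (mat_inv Y4)"
definition "Nt = four_block_mat S (0\<^sub>m r q) (0\<^sub>m p r) (0\<^sub>m p q)"
definition "Nt_pinv = four_block_mat (mat_inv S) (0\<^sub>m r p) (0\<^sub>m q r) (0\<^sub>m q p)"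
definition "Et = four_block_mat (0\<^sub>m r r) (0\<^sub>m r p) (0\<^sub>m p r) (1\<^sub>m p)"
definition "Ft = four_block_mat (0\<^sub>m r r) (0\<^sub>m r q) (0\<^sub>m q r) (1\<^sub>m q)"
definition "Rt = four_block_mat (0\<^sub>m r r) (0\<^sub>m r p) K (0\<^sub>m p p)"
definition "Lt = four_block_mat (0\<^sub>m r r) J (0\<^sub>m q r) (0\<^sub>m q q)"
definition "Pt = four_block_mat P (0\<^sub>m r p) (0\<^sub>m p r) (1\<^sub>m p)"
definition "Qt = four_block_mat Q (0\<^sub>m r q) (0\<^sub>m q r) (1\<^sub>m q)"

lemma carrier_blocks:
  "Xt \<in> carrier_mat (r + p) (r + p)" "Xt_inv \<in> carrier_mat (r + p) (r + p)"
  "Yt \<in> carrier_mat (r + q) (r + q)" "Yt_inv \<in> carrier_mat (r + q) (r + q)"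
  "Nt \<in> carrier_mat (r + p) (r + q)" "Nt_pinv \<in> carrier_mat (r + q) (r + p)"
  "Et \<in> carrier_mat (r + p) (r + p)" "Ft \<in> carrier_mat (r + q) (r + q)"
  "Rt \<in> carrier_mat (r + p) (r + p)" "Lt \<in> carrier_mat (r + q) (r + q)"
  "Pt \<in> carrier_mat (r + p) (r + p)" "Qt \<in> carrier_mat (r + q) (r + q)"
  unfolding Xt_def Xt_inv_def Yt_def Yt_inv_def Nt_def Nt_pinv_def Et_def Ft_def Rt_def Lt_def
    Pt_def Qt_def
  by (auto intro!: carrier_matI)

lemmas dim_blocks[simp] = carrier_blocks[THEN carrier_matD(1)] carrier_blocks[THEN carrier_matD(2)]

lemma Xt_inverse: "Xt * Xt_inv = 1\<^sub>m (r + p)" "Xt_inv * Xt = 1\<^sub>m (r + p)"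
  unfolding Xt_def Xt_inv_def K_def by (simp_all add: block_mat_simps)

lemma Yt_inverse: "Yt * Yt_inv = 1\<^sub>m (r + q)" "Yt_inv * Yt = 1\<^sub>m (r + q)"
  unfolding Yt_def Yt_inv_def J_def by (simp_all add: block_mat_simps)

lemma penrose_Nt: "penrose Nt Nt_pinv"
  unfolding penrose_def using carrier_blocks(5,6)
  by (simp add: Nt_def Nt_pinv_def block_mat_simps)

lemma Et_eq: "1\<^sub>m (r + p) - Nt * Nt_pinv = Et"
  unfolding Et_def Nt_def Nt_pinv_def by (simp add: block_mat_simps)

lemma Ft_eq: "1\<^sub>m (r + q) - Nt_pinv * Nt = Ft"
  unfolding Ft_def Nt_def Nt_pinv_def by (simp add: block_mat_simps)

lemma Rt_eq: "Xt * Et * Xt_inv * (Et - 1\<^sub>m (r + p)) = Rt"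
  unfolding Xt_def Xt_inv_def Et_def Rt_def by (simp add: block_mat_simps)

lemma Lt_eq: "(Ft - 1\<^sub>m (r + q)) * Yt_inv * Ft * Yt = Lt"
  unfolding Yt_def Yt_inv_def Ft_def Lt_def by (simp add: block_mat_simps)

lemma Pt_inverse:
  "(1\<^sub>m (r + p) + mat_adjoint Rt * Rt) * Pt = 1\<^sub>m (r + p)"
  "Pt * (1\<^sub>m (r + p) + mat_adjoint Rt * Rt) = 1\<^sub>m (r + p)"
  unfolding Rt_def Pt_def by (simp_all add: block_mat_simps)

lemma Qt_inverse:
  "(1\<^sub>m (r + q) + Lt * mat_adjoint Lt) * Qt = 1\<^sub>m (r + q)"
  "Qt * (1\<^sub>m (r + q) + Lt * mat_adjoint Lt) = 1\<^sub>m (r + q)"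
  unfolding Lt_def Qt_def by (simp_all add: block_mat_simps)

definition "left_factor = four_block_mat (1\<^sub>m r) (0\<^sub>m r 0) K (0\<^sub>m p 0)"
definition "right_factor = four_block_mat (1\<^sub>m r) J (0\<^sub>m 0 r) (0\<^sub>m 0 q)"

lemma full_rank_factorization: "Xt * Nt * Yt = left_factor * (X1 * S * Y1) * right_factor"
  unfolding Xt_def Nt_def Yt_def left_factor_def right_factor_def K_def J_def
  by (simp add: block_mat_simps)

lemma penrose_Xt_Nt_Yt:
  "penrose (Xt * Nt * Yt)
     ((1\<^sub>m (r + q) + mat_adjoint Lt) * Qt * Yt_inv * Nt_pinv * Xt_inv * Pt * (1\<^sub>m (r + p) + mat_adjoint Rt))"
proof -
  have "penrose (left_factor * (X1 * S * Y1) * right_factor)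
    (mat_adjoint right_factor * Q * (mat_inv Y1 * mat_inv S * mat_inv X1) * P * mat_adjoint left_factor)"
    by (rule penrose_full_rank_factorization[where m = "r + p" and n = "r + q"])
      (simp_all add: left_factor_def right_factor_def block_mat_simps carrier_matI)
  also have "mat_adjoint right_factor * Q * (mat_inv Y1 * mat_inv S * mat_inv X1) * P * mat_adjoint left_factor
    = (1\<^sub>m (r + q) + mat_adjoint Lt) * Qt * Yt_inv * Nt_pinv * Xt_inv * Pt * (1\<^sub>m (r + p) + mat_adjoint Rt)"
    unfolding left_factor_def right_factor_def Lt_def Qt_def Yt_inv_def Nt_pinv_def Xt_inv_def Pt_def Rt_def
    by (simp add: block_mat_simps)
  finally show ?thesis unfolding full_rank_factorization .
qed

end

locale svd_coordinates = triangular_blocks +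
  fixes U V :: "complex mat"
  assumes U: "unitary_mat U (r + p)" and V: "unitary_mat V (r + q)"
begin

lemma dim_unitary[simp]: "dim_row U = r + p" "dim_col U = r + p" "dim_row V = r + q" "dim_col V = r + q"
  using unitary_matD[OF U] unitary_matD[OF V] by auto

lemma mp_inv_product:
  assumes N: "N = basis_change U Nt V" and X: "X = basis_change U Xt U"
    and Y: "Y = basis_change V Yt V"
    and R: "R = X * E_mat N * mat_inv X * (E_mat N - 1\<^sub>m (r + p))"
    and L: "L = (F_mat N - 1\<^sub>m (r + q)) * mat_inv Y * F_mat N * Y"
  shows "mp_inv (X * N * Y) =
    (1\<^sub>m (r + q) + mat_adjoint L) * mat_inv (1\<^sub>m (r + q) + L * mat_adjoint L) * mat_inv Y * mp_inv N
    * mat_inv X * mat_inv (1\<^sub>m (r + p) + mat_adjoint R * R) * (1\<^sub>m (r + p) + mat_adjoint R)"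
proof -
  have pinv_N: "mp_inv N = basis_change V Nt_pinv U"
    unfolding N by (intro mp_inv_eqI penrose_basis_change penrose_Nt) (simp_all add: U V)
  have E: "E_mat N = basis_change U Et U"
    unfolding E_mat_def pinv_N by (simp add: N U V Et_eq)
  have F: "F_mat N = basis_change V Ft V"
    unfolding F_mat_def pinv_N by (simp add: N U V Ft_eq)
  have inv_X: "mat_inv X = basis_change U Xt_inv U"
    unfolding X using U carrier_blocks Xt_inverse by (intro mat_inv_basis_change)
  have inv_Y: "mat_inv Y = basis_change V Yt_inv V"
    unfolding Y using V carrier_blocks Yt_inverse by (intro mat_inv_basis_change)
  have R_eq: "R = basis_change U Rt U"
    unfolding R E inv_X by (simp add: X U Rt_eq)
  have L_eq: "L = basis_change V Lt V"
    unfolding L F inv_Y by (simp add: Y V Lt_eq)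
  have inv_P: "mat_inv (basis_change U (1\<^sub>m (r + p) + mat_adjoint Rt * Rt) U) = basis_change U Pt U"
    using U carrier_blocks Pt_inverse by (intro mat_inv_basis_change) auto
  have inv_Q: "mat_inv (basis_change V (1\<^sub>m (r + q) + Lt * mat_adjoint Lt) V) = basis_change V Qt V"
    using V carrier_blocks Qt_inverse by (intro mat_inv_basis_change) auto
  have "mp_inv (basis_change U (Xt * Nt * Yt) V) = basis_change V
    ((1\<^sub>m (r + q) + mat_adjoint Lt) * Qt * Yt_inv * Nt_pinv * Xt_inv * Pt * (1\<^sub>m (r + p) + mat_adjoint Rt)) U"
    by (intro mp_inv_eqI penrose_basis_change penrose_Xt_Nt_Yt) (simp_all add: U V)
  then show ?thesis
    unfolding R_eq L_eq pinv_N inv_X inv_Y by (simp add: N X Y inv_P inv_Q U V)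
qed

end

theorem corollary3p4:
  fixes N X Y U V \<Sigma> X1 X2 X4 Y1 Y3 Y4 :: "complex mat" and m n r :: nat
  assumes N: "N \<in> carrier_mat m n"
    and rk: "vec_space.rank m N = r"
    and Sig: "\<Sigma> \<in> carrier_mat r r" "diagonal_mat \<Sigma>"
      "\<forall>i<r. Im (\<Sigma> $$ (i,i)) = 0 \<and> Re (\<Sigma> $$ (i,i)) > 0"
    and U: "unitary_mat U m" and V: "unitary_mat V n"
    and svd: "N = U * four_block_mat \<Sigma> (0\<^sub>m r (n - r)) (0\<^sub>m (m - r) r) (0\<^sub>m (m - r) (n - r))
                  * mat_adjoint V"
    and X: "X \<in> carrier_mat m m" "invertible_mat X"
    and Y: "Y \<in> carrier_mat n n" "invertible_mat Y"
    and Xb: "X1 \<in> carrier_mat r r" "X2 \<in> carrier_mat (m - r) r" "X4 \<in> carrier_mat (m - r) (m - r)"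
      "X = U * four_block_mat X1 (0\<^sub>m r (m - r)) X2 X4 * mat_adjoint U"
    and Yb: "Y1 \<in> carrier_mat r r" "Y3 \<in> carrier_mat r (n - r)" "Y4 \<in> carrier_mat (n - r) (n - r)"
      "Y = V * four_block_mat Y1 Y3 (0\<^sub>m (n - r) r) Y4 * mat_adjoint V"
    and herm: "hermitian_mat (X * E_mat N)" "hermitian_mat (F_mat N * Y)"
  shows "let M = X * N * Y;
             R = X * E_mat N * mat_inv X * (E_mat N - 1\<^sub>m m);
             L = (F_mat N - 1\<^sub>m n) * mat_inv Y * F_mat N * Y
         in mp_inv M =
              (1\<^sub>m n + mat_adjoint L) * mat_inv (1\<^sub>m n + L * mat_adjoint L) * mat_inv Y
              * mp_inv N * mat_inv X * mat_inv (1\<^sub>m m + mat_adjoint R * R) * (1\<^sub>m m + mat_adjoint R)"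
proof -
  have "r \<le> m" "r \<le> n" using rank_le_dim_row[OF N] vec_space.rank_le_nc[OF N] rk by auto
  define p q where "p = m - r" and "q = n - r"
  with \<open>r \<le> m\<close> \<open>r \<le> n\<close> have mn: "m = r + p" "n = r + q" by auto
  have det_Sigma: "det \<Sigma> \<noteq> 0"
    using Sig by (intro det_diagonal_mat_nonzero) (auto simp: complex_eq_iff)
  have "det X = det X1 * det X4" "det Y = det Y1 * det Y4"
    using det_unitary_similar_lower_block_triangular[OF U[unfolded mn] Xb(1-3)[folded p_def]]
      det_unitary_similar_upper_block_triangular[OF V[unfolded mn] Yb(1-3)[folded q_def]]
    by (simp_all add: Xb(4) Yb(4) p_def q_def)
  then have dets: "det X1 \<noteq> 0" "det X4 \<noteq> 0" "det Y1 \<noteq> 0" "det Y4 \<noteq> 0"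
    using invertible_mat_det_nonzero[OF X] invertible_mat_det_nonzero[OF Y] by auto
  interpret T: svd_coordinates \<Sigma> X1 X2 X4 Y1 Y3 Y4 r p q U V
    using Sig(1) det_Sigma Xb(1-3) Yb(1-3) dets U[unfolded mn] V[unfolded mn]
    by unfold_locales (simp_all add: p_def q_def)
  show ?thesis
    unfolding Let_def mn
    by (rule T.mp_inv_product)
      (unfold basis_change_def T.Nt_def T.Xt_def T.Yt_def, simp_all add: svd Xb(4) Yb(4) p_def q_def)
qed

end
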